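(* There is a single algorithm such that for every code $f$ of a Suslin set $P[f]\subseteq X$, the characteristic function of $P[f]$ is computable in $\mathbf S$ and $f$ via this algorithm; i.e. there is an index $e$ with $\{e\}(\mathbf S,f,x)=1$ if $x\in P[f]$ and $=0$ if $x\notin P[f]$, for all codes $f$ and all $x\in X$.
   Context: The Suslin functional $\mathbf S$ is the type-2 functional with $\mathbf S(g)=0$ if $\forall f\in\mathbb N^{\mathbb N}\exists n\,(g(\bar f(n))=0)$ and $\mathbf S(g)=1$ if $\exists f\in\mathbb N^{\mathbb N}\forall n\,(g(\bar f(n))>0)$, where $\bar f(n)=\langle f(0),\dots,f(n-1)\rangle$. Computability is Kleene computability (S1–S9). Suslin sets and their codes: $\mathrm{SEQ}$ finite sequences of naturals; a Suslin scheme is $s\mapsto P_s\subseteq X$ on $\mathrm{SEQ}$, $\mathbf A(\mathbf P)=\bigcup_{f}\bigcap_n P_{\bar f(n)}$; $\Sigma_0$ clopen sets, $\Sigma_\alpha$ ($\alpha>0$) sets $\mathbf A(\mathbf P)$ with each $P_s\in\Pi_\beta$, $\beta<\alpha$; $\Pi_\alpha$ complements; Suslin sets are the members of $\bigcup_{\alpha<\omega_1}\Sigma_\alpha$. A code is a function $f\in\mathbb N^{\mathbb N}$ coding a well-founded labelled tree (leaves code clopen sets, inner nodes denote complement or application of $\mathbf A$ to the scheme of sets coded by children indexed by $\mathrm{SEQ}$); $P[f]$ is the coded set. $X$ is a product of copies of $\mathbb N^{\mathbb N}$, $\{0,1\}^{\mathbb N}$, $\mathbb N$. *)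

theory Defs
  imports Main "HOL-Library.Nat_Bijection"
begin

definition seqcode :: "(nat \<Rightarrow> nat) \<Rightarrow> nat \<Rightarrow> nat" where
  "seqcode f n = list_encode (map f [0..<n])"

definition suslin_S :: "(nat \<Rightarrow> nat) \<Rightarrow> nat" where
  "suslin_S g = (if \<exists>f. \<forall>n. g (seqcode f n) > 0 then 1 else 0)"

text \<open>An index e is decoded as the list
  list_decode e = [scheme number, parameters...].  kleene e ns fs Fs v means
  that the computation of index e on these arguments terminates with value v.\<close>

definition swap0 :: "'a list \<Rightarrow> nat \<Rightarrow> 'a list" where
  "swap0 l i = l[0 := l ! i, i := l ! 0]"

inductive kleene :: "nat \<Rightarrow> nat list \<Rightarrow> (nat \<Rightarrow> nat) list
    \<Rightarrow> ((nat \<Rightarrow> nat) \<Rightarrow> nat) list \<Rightarrow> nat \<Rightarrow> bool" where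
  S1: "list_decode e = [1] \<Longrightarrow> kleene e (n # ns) fs Fs (Suc n)"
| S2: "list_decode e = [2, q] \<Longrightarrow> kleene e ns fs Fs q"
| S3: "list_decode e = [3] \<Longrightarrow> kleene e (n # ns) fs Fs n"
| S4: "list_decode e = [4, e1, e2] \<Longrightarrow> kleene e2 ns fs Fs m \<Longrightarrow>
       kleene e1 (m # ns) fs Fs v \<Longrightarrow> kleene e ns fs Fs v"
| S5_0: "list_decode e = [5, e1, e2] \<Longrightarrow> kleene e1 ns fs Fs v \<Longrightarrow>
       kleene e (0 # ns) fs Fs v"
| S5_Suc: "list_decode e = [5, e1, e2] \<Longrightarrow> kleene e (n # ns) fs Fs m \<Longrightarrow>
       kleene e2 (m # n # ns) fs Fs v \<Longrightarrow> kleene e (Suc n # ns) fs Fs v"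
| S6_0: "list_decode e = [6, 0, i, e1] \<Longrightarrow> i < length ns \<Longrightarrow>
       kleene e1 (swap0 ns i) fs Fs v \<Longrightarrow> kleene e ns fs Fs v"
| S6_1: "list_decode e = [6, 1, i, e1] \<Longrightarrow> i < length fs \<Longrightarrow>
       kleene e1 ns (swap0 fs i) Fs v \<Longrightarrow> kleene e ns fs Fs v"
| S6_2: "list_decode e = [6, 2, i, e1] \<Longrightarrow> i < length Fs \<Longrightarrow>
       kleene e1 ns fs (swap0 Fs i) v \<Longrightarrow> kleene e ns fs Fs v"
| S7: "list_decode e = [7] \<Longrightarrow> kleene e (n # ns) (f # fs) Fs (f n)"
| S8: "list_decode e = [8, e1] \<Longrightarrow> (\<forall>m. kleene e1 (m # ns) fs (F # Fs) (g m)) \<Longrightarrow>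
       kleene e ns fs (F # Fs) (F g)"
| S9: "list_decode e = [9] \<Longrightarrow> kleene a ns fs Fs v \<Longrightarrow> kleene e (a # ns) fs Fs v"

text \<open>X = (product of the function-coordinates) x N^k; the function coordinates
  are listed by cs, where cs!i = True means the coordinate ranges over {0,1}^N
  and False means it ranges over N^N.\<close>

type_synonym point = "nat list \<times> (nat \<Rightarrow> nat) list"

definition X_space :: "nat \<Rightarrow> bool list \<Rightarrow> point set" where
  "X_space k cs = {(ns, fs). length ns = k \<and> length fs = length cs \<and>
     (\<forall>i<length cs. cs ! i \<longrightarrow> (\<forall>n. (fs ! i) n \<le> 1))}"

text \<open>Basic neighbourhoods: b codes the values of the N-coordinates and an
  initial segment of every function coordinate.\<close>
definition nbhd :: "nat \<Rightarrow> point set" where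
  "nbhd b = {(ns, fs). ns = list_decode (fst (prod_decode b)) \<and>
     length (list_decode (snd (prod_decode b))) = length fs \<and>
     (\<forall>i<length fs. \<forall>j<length (list_decode (list_decode (snd (prod_decode b)) ! i)).
        (fs ! i) j = list_decode (list_decode (snd (prod_decode b)) ! i) ! j)}"

text \<open>Node sigma of the tree coded by f carries the label f(list_encode sigma):
  0 = leaf (clopen set), 1 = complement, 2 = Suslin operation A.
  A complement node has the single child sigma@[0]; an A-node has the children
  sigma@[list_encode s] for s in SEQ, forming the Suslin scheme.\<close>

definition lab :: "(nat \<Rightarrow> nat) \<Rightarrow> nat list \<Rightarrow> nat" where
  "lab f \<sigma> = f (list_encode \<sigma>)"

inductive node :: "(nat \<Rightarrow> nat) \<Rightarrow> nat list \<Rightarrow> bool" for f where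
  root: "node f []"
| compl: "node f \<sigma> \<Longrightarrow> lab f \<sigma> = 1 \<Longrightarrow> node f (\<sigma> @ [0])"
| susl: "node f \<sigma> \<Longrightarrow> lab f \<sigma> = 2 \<Longrightarrow> node f (\<sigma> @ [n])"

text \<open>Leaf data: a leaf sigma codes a clopen set by the sequence
  n |-> f(list_encode (sigma@[n])), whose n-th entry codes a bit and a basic
  neighbourhood; these neighbourhoods must cover X with consistent bits, and the
  coded clopen set is the union of the neighbourhoods with bit 1.\<close>

definition leaf_bit :: "(nat \<Rightarrow> nat) \<Rightarrow> nat list \<Rightarrow> nat \<Rightarrow> nat" where
  "leaf_bit f \<sigma> n = fst (prod_decode (f (list_encode (\<sigma> @ [n]))))"

definition leaf_nbhd :: "(nat \<Rightarrow> nat) \<Rightarrow> nat list \<Rightarrow> nat \<Rightarrow> point set" where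
  "leaf_nbhd f \<sigma> n = nbhd (snd (prod_decode (f (list_encode (\<sigma> @ [n])))))"

definition valid_clopen :: "nat \<Rightarrow> bool list \<Rightarrow> (nat \<Rightarrow> nat) \<Rightarrow> nat list \<Rightarrow> bool" where
  "valid_clopen k cs f \<sigma> \<longleftrightarrow>
     (\<forall>x\<in>X_space k cs. \<exists>n. x \<in> leaf_nbhd f \<sigma> n) \<and>
     (\<forall>x\<in>X_space k cs. \<forall>n m. x \<in> leaf_nbhd f \<sigma> n \<and> x \<in> leaf_nbhd f \<sigma> m
         \<longrightarrow> leaf_bit f \<sigma> n = leaf_bit f \<sigma> m)"

definition clopen_of :: "nat \<Rightarrow> bool list \<Rightarrow> (nat \<Rightarrow> nat) \<Rightarrow> nat list \<Rightarrow> point set" where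
  "clopen_of k cs f \<sigma> = {x \<in> X_space k cs. \<exists>n. x \<in> leaf_nbhd f \<sigma> n \<and> leaf_bit f \<sigma> n = 1}"

definition is_code :: "nat \<Rightarrow> bool list \<Rightarrow> (nat \<Rightarrow> nat) \<Rightarrow> bool" where
  "is_code k cs f \<longleftrightarrow>
     (\<forall>\<sigma>. node f \<sigma> \<longrightarrow> lab f \<sigma> \<le> 2) \<and>
     (\<forall>\<sigma>. node f \<sigma> \<and> lab f \<sigma> = 0 \<longrightarrow> valid_clopen k cs f \<sigma>) \<and>
     \<not> (\<exists>g. \<forall>n. node f (map g [0..<n]))"

definition suslin_op :: "(nat list \<Rightarrow> 'a set) \<Rightarrow> 'a set" where
  "suslin_op P = (\<Union>g. \<Inter>n. P (map g [0..<n]))"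

inductive denotes :: "nat \<Rightarrow> bool list \<Rightarrow> (nat \<Rightarrow> nat) \<Rightarrow> nat list \<Rightarrow> point set \<Rightarrow> bool"
  for k cs f where
  leaf: "lab f \<sigma> = 0 \<Longrightarrow> denotes k cs f \<sigma> (clopen_of k cs f \<sigma>)"
| compl: "lab f \<sigma> = 1 \<Longrightarrow> denotes k cs f (\<sigma> @ [0]) S \<Longrightarrow>
          denotes k cs f \<sigma> (X_space k cs - S)"
| susl: "lab f \<sigma> = 2 \<Longrightarrow> (\<forall>s. denotes k cs f (\<sigma> @ [list_encode s]) (P s)) \<Longrightarrow>
          denotes k cs f \<sigma> (suslin_op P)"

definition coded_set :: "nat \<Rightarrow> bool list \<Rightarrow> (nat \<Rightarrow> nat) \<Rightarrow> point set" where
  "coded_set k cs f = (THE S. denotes k cs f [] S)"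

end

theory Submission
  imports Defs
begin

text \<open>A code is a well-founded tree, so its set can be evaluated by recursion on the tree:
  at a leaf one searches for a covering neighbourhood containing the point and reads off its
  bit, at a complement node one subtracts the value of the child from 1, and at an A-node
  the value is S applied to the characteristic function s \<mapsto> [x \<in> P_s] of the scheme,
  which is computable by the same recursion. Since S1--S9 has no built-in recursion, the
  evaluator receives its own index and calls itself through S9; termination of each such
  computation is proved by well-founded induction on the tree.\<close>

section \<open>A small programming language on top of S1--S9\<close>

declare One_nat_def [simp del] \<comment> \<open>keeps proj 1 from turning into proj (Suc 0)\<close>

definition const_prog :: "nat \<Rightarrow> nat" where
  "const_prog q = list_encode [2, q]"

definition succ_prog :: nat where
  "succ_prog = list_encode [1]"

definition head_prog :: nat where
  "head_prog = list_encode [3]"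

definition comp1 :: "nat \<Rightarrow> nat \<Rightarrow> nat" where
  "comp1 g t = list_encode [4, g, t]"

definition primrec_prog :: "nat \<Rightarrow> nat \<Rightarrow> nat" where
  "primrec_prog z s = list_encode [5, z, s]"

definition proj :: "nat \<Rightarrow> nat" where
  "proj i = list_encode [6, 0, i, head_prog]"

definition fun_app :: "nat \<Rightarrow> nat" where
  "fun_app j = list_encode [6, 1, j, list_encode [7]]"

definition apply_type2 :: "nat \<Rightarrow> nat" where
  "apply_type2 e = list_encode [8, e]"

definition run_prog :: nat where
  "run_prog = list_encode [9]"

lemma kleene_const: "kleene (const_prog q) ns fs Fs q"
  unfolding const_prog_def by (rule kleene.S2) simp

lemma kleene_succ: "kleene succ_prog (n # ns) fs Fs (Suc n)"
  unfolding succ_prog_def by (rule kleene.S1) simp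

lemma kleene_head: "kleene head_prog (n # ns) fs Fs n"
  unfolding head_prog_def by (rule kleene.S3) simp

lemma kleene_comp1:
  "kleene t ns fs Fs a \<Longrightarrow> kleene g (a # ns) fs Fs v \<Longrightarrow> kleene (comp1 g t) ns fs Fs v"
  unfolding comp1_def by (rule kleene.S4) simp_all

lemma kleene_primrec:
  assumes zero: "kleene z ns fs Fs (h 0)"
    and step: "\<And>n. kleene s (h n # n # ns) fs Fs (h (Suc n))"
  shows "kleene (primrec_prog z s) (n # ns) fs Fs (h n)"
proof (induction n)
  case 0
  show ?case by (rule kleene.S5_0[OF _ zero]) (simp add: primrec_prog_def)
next
  case (Suc n)
  show ?case by (rule kleene.S5_Suc[OF _ Suc step]) (simp add: primrec_prog_def)
qed

lemma swap0_eq_Cons: "i < length l \<Longrightarrow> \<exists>r. swap0 l i = l ! i # r"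
  unfolding swap0_def by (cases l; cases i) auto

lemma kleene_proj:
  assumes "i < length ns" and "ns ! i = v"
  shows "kleene (proj i) ns fs Fs v"
proof -
  obtain r where "swap0 ns i = v # r" using swap0_eq_Cons assms by metis
  then have "kleene head_prog (swap0 ns i) fs Fs v" by (simp add: kleene_head)
  from kleene.S6_0[OF _ assms(1) this] show ?thesis by (simp add: proj_def)
qed

lemma kleene_proj_0: "kleene (proj 0) (a # ns) fs Fs a"
  and kleene_proj_1: "kleene (proj 1) (a # b # ns) fs Fs b"
  and kleene_proj_2: "kleene (proj 2) (a # b # c # ns) fs Fs c"
  by (rule kleene_proj; simp)+

lemma kleene_fun_app:
  assumes "j < length fs" and "(fs ! j) n = v"
  shows "kleene (fun_app j) (n # ns) fs Fs v"
proof -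
  obtain r where r: "swap0 fs j = fs ! j # r" using swap0_eq_Cons assms(1) by metis
  have "kleene (list_encode [7]) (n # ns) (swap0 fs j) Fs v"
    unfolding r assms(2)[symmetric] by (rule kleene.S7) simp
  from kleene.S6_1[OF _ assms(1) this] show ?thesis by (simp add: fun_app_def)
qed

lemma kleene_apply_type2:
  "(\<And>m. kleene e (m # ns) fs (F # Fs) (g m)) \<Longrightarrow> kleene (apply_type2 e) ns fs (F # Fs) (F g)"
  unfolding apply_type2_def by (rule kleene.S8) auto

lemma kleene_run: "kleene a ns fs Fs v \<Longrightarrow> kleene run_prog (a # ns) fs Fs v"
  unfolding run_prog_def by (rule kleene.S9) simp_all

text \<open>Unfolds a recursive program where it is executed, but not where it is passed
  as its own argument.\<close>
lemma kleene_unfold: "e = e' \<Longrightarrow> kleene e' ns fs Fs v \<Longrightarrow> kleene e ns fs Fs v"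
  by simp

definition drop_arg :: "nat \<Rightarrow> nat" where
  "drop_arg e = primrec_prog e head_prog"

lemma kleene_drop_arg: "kleene e ns fs Fs v \<Longrightarrow> kleene (drop_arg e) (a # ns) fs Fs v"
  unfolding drop_arg_def by (rule kleene_primrec[where h = "\<lambda>_. v"]) (simp_all add: kleene_head)

definition pred_prog :: nat where
  "pred_prog = primrec_prog (const_prog 0) (proj 1)"

lemma kleene_pred: "kleene pred_prog (n # ns) fs Fs (n - 1)"
  unfolding pred_prog_def
  by (rule kleene_primrec[where h = "\<lambda>n. n - 1"]) (simp_all add: kleene_const kleene_proj)

definition case_prog :: "nat \<Rightarrow> nat \<Rightarrow> nat" where
  "case_prog A B = primrec_prog (const_prog A) (const_prog B)"

lemma kleene_case_prog: "kleene (case_prog A B) (c # ns) fs Fs (if c = 0 then A else B)"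
  unfolding case_prog_def
  by (rule kleene_primrec[where h = "\<lambda>c. if c = 0 then A else B"]) (simp_all add: kleene_const)

text \<open>The branches are selected as indices and only then executed by S9, so the branch
  that is not taken need not terminate; recursive programs rely on this.\<close>
definition if_zero :: "nat \<Rightarrow> nat \<Rightarrow> nat \<Rightarrow> nat" where
  "if_zero t A B = comp1 run_prog (comp1 (case_prog A B) t)"

lemma kleene_if_zero:
  assumes "kleene t ns fs Fs c"
    and "c = 0 \<Longrightarrow> kleene A ns fs Fs v" and "c \<noteq> 0 \<Longrightarrow> kleene B ns fs Fs v"
  shows "kleene (if_zero t A B) ns fs Fs v"
  unfolding if_zero_def
  by (rule kleene_comp1[OF kleene_comp1[OF assms(1) kleene_case_prog] kleene_run])
    (use assms(2,3) in auto)

lemma kleene_if_zero_then: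
  "kleene t ns fs Fs c \<Longrightarrow> c = 0 \<Longrightarrow> kleene A ns fs Fs v \<Longrightarrow> kleene (if_zero t A B) ns fs Fs v"
  by (erule kleene_if_zero) simp_all

lemma kleene_if_zero_else:
  "kleene t ns fs Fs c \<Longrightarrow> c \<noteq> 0 \<Longrightarrow> kleene B ns fs Fs v \<Longrightarrow> kleene (if_zero t A B) ns fs Fs v"
  by (erule kleene_if_zero) simp_all

fun drop_args :: "nat \<Rightarrow> nat \<Rightarrow> nat" where
  "drop_args 0 t = t"
| "drop_args (Suc n) t = drop_arg (drop_args n t)"

lemma kleene_drop_args: "kleene t ns fs Fs v \<Longrightarrow> kleene (drop_args (length pre) t) (pre @ ns) fs Fs v"
  by (induction pre) (simp_all add: kleene_drop_arg)

fun call :: "nat list \<Rightarrow> nat \<Rightarrow> nat" where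
  "call [] g = g"
| "call (t # ts) g = call ts (comp1 g (drop_args (length ts) t))"

lemma kleene_call:
  "list_all2 (\<lambda>t v. kleene t ns fs Fs v) ts vs \<Longrightarrow> kleene g (vs @ ns) fs Fs w
    \<Longrightarrow> kleene (call ts g) ns fs Fs w"
proof (induction ts arbitrary: g vs)
  case Nil
  then show ?case by simp
next
  case (Cons t ts)
  then obtain v vs' where vs: "vs = v # vs'" and v: "kleene t ns fs Fs v"
    and vs': "list_all2 (\<lambda>t v. kleene t ns fs Fs v) ts vs'"
    by (cases vs) auto
  have "length ts = length vs'" using vs' by (simp add: list_all2_lengthD)
  then have "kleene (drop_args (length ts) t) (vs' @ ns) fs Fs v"
    using kleene_drop_args[OF v, of vs'] by simp
  then have "kleene (comp1 g (drop_args (length ts) t)) (vs' @ ns) fs Fs w"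
    by (rule kleene_comp1) (use Cons.prems(2) vs in simp)
  then show ?case using Cons.IH[OF vs'] by simp
qed

lemma kleene_call3:
  assumes "kleene t1 ns fs Fs a1" and "kleene t2 ns fs Fs a2" and "kleene t3 ns fs Fs a3"
    and "kleene g (a1 # a2 # a3 # ns) fs Fs v"
  shows "kleene (call [t1, t2, t3] g) ns fs Fs v"
  using assms by (intro kleene_call[where vs = "[a1, a2, a3]"]) simp_all

lemma kleene_call4:
  assumes "kleene t1 ns fs Fs a1" and "kleene t2 ns fs Fs a2" and "kleene t3 ns fs Fs a3"
    and "kleene t4 ns fs Fs a4" and "kleene g (a1 # a2 # a3 # a4 # ns) fs Fs v"
  shows "kleene (call [t1, t2, t3, t4] g) ns fs Fs v"
  using assms by (intro kleene_call[where vs = "[a1, a2, a3, a4]"]) simp_all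

definition comp2 :: "nat \<Rightarrow> nat \<Rightarrow> nat \<Rightarrow> nat" where
  "comp2 g t u = call [t, u] g"

lemma kleene_comp2:
  "kleene t ns fs Fs a \<Longrightarrow> kleene u ns fs Fs b \<Longrightarrow> kleene g (a # b # ns) fs Fs v
    \<Longrightarrow> kleene (comp2 g t u) ns fs Fs v"
  unfolding comp2_def by (rule kleene_call[where vs = "[a, b]"]) simp_all

section \<open>Arithmetic and decoding of pairs and lists\<close>

definition sub_prog :: nat where
  "sub_prog = comp2 (primrec_prog (proj 0) (comp1 pred_prog (proj 0))) (proj 1) (proj 0)"

lemma kleene_sub: "kleene sub_prog (a # b # ns) fs Fs (a - b)"
proof -
  have "kleene (primrec_prog (proj 0) (comp1 pred_prog (proj 0))) (b # a # a # b # ns) fs Fs (a - b)"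
  proof (rule kleene_primrec[where h = "\<lambda>b. a - b"])
    show "kleene (proj 0) (a # a # b # ns) fs Fs (a - 0)" using kleene_proj_0 by simp
    fix n
    have "kleene (comp1 pred_prog (proj 0)) ((a - n) # n # a # a # b # ns) fs Fs (a - n - 1)"
      by (rule kleene_comp1[OF kleene_proj_0 kleene_pred])
    then show "kleene (comp1 pred_prog (proj 0)) ((a - n) # n # a # a # b # ns) fs Fs (a - Suc n)"
      by (simp add: Suc_eq_plus1)
  qed
  then show ?thesis unfolding sub_prog_def by (rule kleene_comp2[OF kleene_proj_1 kleene_proj_0])
qed

definition add_prog :: nat where
  "add_prog = comp2 (primrec_prog (proj 0) (comp1 succ_prog (proj 0))) (proj 1) (proj 0)"

lemma kleene_add: "kleene add_prog (a # b # ns) fs Fs (a + b)"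
proof -
  have "kleene (primrec_prog (proj 0) (comp1 succ_prog (proj 0))) (b # a # a # b # ns) fs Fs (a + b)"
    by (rule kleene_primrec[where h = "\<lambda>b. a + b"])
      (simp_all add: kleene_proj_0 kleene_comp1[OF kleene_proj_0 kleene_succ])
  then show ?thesis unfolding add_prog_def by (rule kleene_comp2[OF kleene_proj_1 kleene_proj_0])
qed

definition triangle_prog :: nat where
  "triangle_prog = primrec_prog (const_prog 0) (comp2 add_prog (proj 0) (comp1 succ_prog (proj 1)))"

lemma kleene_triangle: "kleene triangle_prog (n # ns) fs Fs (triangle n)"
  unfolding triangle_prog_def
proof (rule kleene_primrec)
  show "kleene (const_prog 0) ns fs Fs (triangle 0)" by (simp add: kleene_const)
  fix n
  have "kleene (comp2 add_prog (proj 0) (comp1 succ_prog (proj 1))) (triangle n # n # ns) fs Fs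
      (triangle n + Suc n)"
    by (rule kleene_comp2[OF kleene_proj_0 kleene_comp1[OF kleene_proj_1 kleene_succ] kleene_add])
  then show "kleene (comp2 add_prog (proj 0) (comp1 succ_prog (proj 1))) (triangle n # n # ns) fs Fs
      (triangle (Suc n))" by simp
qed

definition prod_encode_prog :: nat where
  "prod_encode_prog =
     comp2 add_prog (comp1 triangle_prog (comp2 add_prog (proj 0) (proj 1))) (proj 0)"

lemma kleene_prod_encode: "kleene prod_encode_prog (a # b # ns) fs Fs (prod_encode (a, b))"
  unfolding prod_encode_prog_def prod_encode_def
  by (simp add: kleene_comp2[OF kleene_comp1[OF kleene_comp2[OF kleene_proj_0 kleene_proj_1 kleene_add]
        kleene_triangle] kleene_proj_0 kleene_add])

text \<open>Tests return 0 for true, so that if_zero branches on them directly.\<close>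
definition truth :: "bool \<Rightarrow> nat" where
  "truth P = (if P then 0 else 1)"

definition eq_test :: "nat \<Rightarrow> nat \<Rightarrow> nat" where
  "eq_test t u =
     if_zero (comp2 sub_prog t u) (if_zero (comp2 sub_prog u t) (const_prog 0) (const_prog 1)) (const_prog 1)"

lemma kleene_eq_test:
  assumes t: "kleene t ns fs Fs a" and u: "kleene u ns fs Fs b"
  shows "kleene (eq_test t u) ns fs Fs (truth (a = b))"
  unfolding eq_test_def
  by (intro kleene_if_zero[OF kleene_comp2[OF t u kleene_sub]]
      kleene_if_zero[OF kleene_comp2[OF u t kleene_sub]])
    (auto simp: truth_def kleene_const)

text \<open>A recursive program receives its own index as first argument and re-enters
  itself through S9 with run_prog.\<close>
definition decode_loop :: "nat \<Rightarrow> nat" where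
  "decode_loop out =
     if_zero (comp2 sub_prog (proj 2) (proj 1)) out
       (call [proj 0, proj 0, comp1 succ_prog (proj 1), comp2 sub_prog (proj 2) (comp1 succ_prog (proj 1))]
          run_prog)"

lemma kleene_decode_loop:
  assumes out: "\<And>y k m ns. m \<le> k \<Longrightarrow> kleene out (y # k # m # ns) fs Fs (sel (m, k - m))"
  shows "kleene (decode_loop out) (decode_loop out # k # m # ns) fs Fs (sel (prod_decode_aux k m))"
proof (induction k m arbitrary: ns rule: prod_decode_aux.induct)
  case (1 k m)
  let ?E = "decode_loop out # k # m # ns"
  show ?case
  proof (rule kleene_unfold[OF decode_loop_def],
      rule kleene_if_zero[OF kleene_comp2[OF kleene_proj_2 kleene_proj_1 kleene_sub]])
    assume "m - k = 0"
    then show "kleene out ?E fs Fs (sel (prod_decode_aux k m))"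
      using out[of m k] by (simp add: prod_decode_aux.simps)
  next
    assume less: "m - k \<noteq> 0"
    have succ: "kleene (comp1 succ_prog (proj 1)) ?E fs Fs (Suc k)"
      by (rule kleene_comp1[OF kleene_proj_1 kleene_succ])
    have "kleene (decode_loop out) (decode_loop out # Suc k # (m - Suc k) # ?E) fs Fs
        (sel (prod_decode_aux (Suc k) (m - Suc k)))"
      using 1 less by simp
    from kleene_call4[OF kleene_proj_0 kleene_proj_0 succ
        kleene_comp2[OF kleene_proj_2 succ kleene_sub] kleene_run[OF this]]
    show "kleene (call [proj 0, proj 0, comp1 succ_prog (proj 1),
        comp2 sub_prog (proj 2) (comp1 succ_prog (proj 1))] run_prog) ?E fs Fs (sel (prod_decode_aux k m))"
      using less by (simp add: prod_decode_aux.simps[of k m])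
  qed
qed

definition fst_decode_prog :: nat where
  "fst_decode_prog = call [const_prog (decode_loop (proj 2)), const_prog 0, proj 0] (decode_loop (proj 2))"

definition snd_decode_prog :: nat where
  "snd_decode_prog =
     call [const_prog (decode_loop (comp2 sub_prog (proj 1) (proj 2))), const_prog 0, proj 0]
       (decode_loop (comp2 sub_prog (proj 1) (proj 2)))"

lemma kleene_fst_decode: "kleene fst_decode_prog (n # ns) fs Fs (fst (prod_decode n))"
proof -
  have "kleene (decode_loop (proj 2)) (decode_loop (proj 2) # 0 # n # n # ns) fs Fs
      (fst (prod_decode_aux 0 n))"
    by (rule kleene_decode_loop[where sel = fst]) (simp add: kleene_proj_2)
  then show ?thesis unfolding fst_decode_prog_def prod_decode_def
    by (rule kleene_call3[OF kleene_const kleene_const kleene_proj_0])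
qed

lemma kleene_snd_decode: "kleene snd_decode_prog (n # ns) fs Fs (snd (prod_decode n))"
proof -
  let ?out = "comp2 sub_prog (proj 1) (proj 2)"
  have "kleene (decode_loop ?out) (decode_loop ?out # 0 # n # n # ns) fs Fs (snd (prod_decode_aux 0 n))"
    by (rule kleene_decode_loop[where sel = snd])
      (simp add: kleene_comp2[OF kleene_proj_1 kleene_proj_2 kleene_sub])
  then show ?thesis unfolding snd_decode_prog_def prod_decode_def
    by (rule kleene_call3[OF kleene_const kleene_const kleene_proj_0])
qed

definition code_hd :: "nat \<Rightarrow> nat" where
  "code_hd c = fst (prod_decode (c - 1))"

definition code_tl :: "nat \<Rightarrow> nat" where
  "code_tl c = snd (prod_decode (c - 1))"

definition code_nth :: "nat \<Rightarrow> nat \<Rightarrow> nat" where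
  "code_nth c i = code_hd ((code_tl ^^ i) c)"

lemma code_hd_Suc_prod_encode [simp]: "code_hd (Suc (prod_encode (x, c))) = x"
  by (simp add: code_hd_def)

lemma code_tl_Suc_prod_encode [simp]: "code_tl (Suc (prod_encode (x, c))) = c"
  by (simp add: code_tl_def)

lemma code_tl_list_encode: "code_tl (list_encode xs) = list_encode (tl xs)"
proof (cases xs)
  case Nil
  then show ?thesis by (simp add: code_tl_def prod_decode_def prod_decode_aux.simps[of 0 0])
qed simp

lemma code_nth_list_decode: "i < length (list_decode c) \<Longrightarrow> code_nth c i = list_decode c ! i"
proof -
  assume i: "i < length (list_decode c)"
  have "(code_tl ^^ i) (list_encode xs) = list_encode (drop i xs)" for xs :: "nat list"
    by (induction i) (simp_all add: code_tl_list_encode drop_Suc tl_drop)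
  from this[of "list_decode c"] show ?thesis
    using i by (simp add: code_nth_def Cons_nth_drop_Suc[symmetric])
qed

definition hd_prog :: nat where
  "hd_prog = comp1 fst_decode_prog pred_prog"

definition tl_prog :: nat where
  "tl_prog = comp1 snd_decode_prog pred_prog"

lemma kleene_hd: "kleene hd_prog (c # ns) fs Fs (code_hd c)"
  unfolding hd_prog_def code_hd_def by (rule kleene_comp1[OF kleene_pred kleene_fst_decode])

lemma kleene_tl: "kleene tl_prog (c # ns) fs Fs (code_tl c)"
  unfolding tl_prog_def code_tl_def by (rule kleene_comp1[OF kleene_pred kleene_snd_decode])

definition nth_prog :: nat where
  "nth_prog = comp1 hd_prog (comp2 (primrec_prog (proj 0) (comp1 tl_prog (proj 0))) (proj 1) (proj 0))"

lemma kleene_nth: "kleene nth_prog (c # i # ns) fs Fs (code_nth c i)"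
proof -
  have loop: "kleene (primrec_prog (proj 0) (comp1 tl_prog (proj 0))) (i # c # c # i # ns) fs Fs
      ((code_tl ^^ i) c)"
    by (rule kleene_primrec[where h = "\<lambda>i. (code_tl ^^ i) c"])
      (simp_all add: kleene_proj_0 kleene_comp1[OF kleene_proj_0 kleene_tl])
  show ?thesis unfolding nth_prog_def code_nth_def
    by (rule kleene_comp1[OF kleene_comp2[OF kleene_proj_1 kleene_proj_0 loop] kleene_hd])
qed

lemma kleene_tl_second_arg:
  "kleene (comp1 tl_prog (proj 1)) (y # list_encode (x # xs) # ns) fs Fs (list_encode xs)"
  using kleene_comp1[OF kleene_proj_1 kleene_tl, of y "list_encode (x # xs)" ns fs Fs]
  by (simp del: list_encode.simps add: code_tl_list_encode)

definition length_loop :: nat where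
  "length_loop =
     if_zero (proj 1) (const_prog 0)
       (comp1 succ_prog (call [proj 0, proj 0, comp1 tl_prog (proj 1)] run_prog))"

definition length_prog :: nat where
  "length_prog = comp2 length_loop (const_prog length_loop) (proj 0)"

lemma kleene_length: "kleene length_prog (c # ns) fs Fs (length (list_decode c))"
proof -
  have "kleene length_loop (length_loop # list_encode xs # ns) fs Fs (length xs)" for xs ns
  proof (induction xs arbitrary: ns)
    case Nil
    show ?case
      by (rule kleene_unfold[OF length_loop_def], rule kleene_if_zero_then[OF kleene_proj_1])
        (simp_all add: kleene_const)
  next
    case (Cons x xs)
    have "kleene length_loop (length_loop # list_encode (x # xs) # ns) fs Fs (Suc (length xs))"
      by (rule kleene_unfold[OF length_loop_def], rule kleene_if_zero_else[OF kleene_proj_1 _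
            kleene_comp1[OF kleene_call3[OF kleene_proj_0 kleene_proj_0 kleene_tl_second_arg
                kleene_run[OF Cons]] kleene_succ]])
        simp
    then show ?case by simp
  qed
  from this[of "list_decode c" "c # ns"]
  have "kleene length_loop (length_loop # c # c # ns) fs Fs (length (list_decode c))" by simp
  then show ?thesis unfolding length_prog_def by (rule kleene_comp2[OF kleene_const kleene_proj_0])
qed

definition snoc_loop :: nat where
  "snoc_loop =
     if_zero (proj 1) (comp1 succ_prog (comp2 prod_encode_prog (proj 2) (const_prog 0)))
       (comp1 succ_prog (comp2 prod_encode_prog (comp1 hd_prog (proj 1))
          (call [proj 0, proj 0, comp1 tl_prog (proj 1), proj 2] run_prog)))"

definition snoc_prog :: nat where
  "snoc_prog = call [const_prog snoc_loop, proj 0, proj 1] snoc_loop"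

lemma kleene_snoc: "kleene snoc_prog (c # m # ns) fs Fs (list_encode (list_decode c @ [m]))"
proof -
  have "kleene snoc_loop (snoc_loop # list_encode xs # m # ns) fs Fs (list_encode (xs @ [m]))" for xs ns
  proof (induction xs arbitrary: ns)
    case Nil
    have "kleene snoc_loop (snoc_loop # 0 # m # ns) fs Fs (Suc (prod_encode (m, 0)))"
      by (rule kleene_unfold[OF snoc_loop_def], rule kleene_if_zero_then[OF kleene_proj_1 _
            kleene_comp1[OF kleene_comp2[OF kleene_proj_2 kleene_const kleene_prod_encode] kleene_succ]])
        simp
    then show ?case by simp
  next
    case (Cons x xs)
    let ?E = "snoc_loop # list_encode (x # xs) # m # ns"
    have "kleene (comp1 hd_prog (proj 1)) ?E fs Fs (code_hd (list_encode (x # xs)))"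
      by (rule kleene_comp1[OF kleene_proj_1 kleene_hd])
    then have hd: "kleene (comp1 hd_prog (proj 1)) ?E fs Fs x" by simp
    have rec: "kleene (call [proj 0, proj 0, comp1 tl_prog (proj 1), proj 2] run_prog) ?E fs Fs
        (list_encode (xs @ [m]))"
      by (rule kleene_call4[OF kleene_proj_0 kleene_proj_0 kleene_tl_second_arg kleene_proj_2
            kleene_run[OF Cons]])
    have "kleene snoc_loop ?E fs Fs (Suc (prod_encode (x, list_encode (xs @ [m]))))"
      by (rule kleene_unfold[OF snoc_loop_def], rule kleene_if_zero_else[OF kleene_proj_1 _
            kleene_comp1[OF kleene_comp2[OF hd rec kleene_prod_encode] kleene_succ]])
        simp
    then show ?case by simp
  qed
  from this[of "list_decode c" "c # m # ns"]
  have "kleene snoc_loop (snoc_loop # c # m # c # m # ns) fs Fs (list_encode (list_decode c @ [m]))"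
    by simp
  then show ?thesis unfolding snoc_prog_def
    by (rule kleene_call3[OF kleene_const kleene_proj_0 kleene_proj_1])
qed

section \<open>Boolean tests and basic neighbourhoods\<close>

definition and_test :: "nat \<Rightarrow> nat \<Rightarrow> nat" where
  "and_test t u = if_zero t u (const_prog 1)"

lemma kleene_and_test:
  assumes "kleene t ns fs Fs (truth P)" and "kleene u ns fs Fs (truth Q)"
  shows "kleene (and_test t u) ns fs Fs (truth (P \<and> Q))"
  unfolding and_test_def
  by (rule kleene_if_zero[OF assms(1)]) (use assms(2) in \<open>auto simp: truth_def kleene_const\<close>)

fun all_test :: "(nat \<Rightarrow> nat) \<Rightarrow> nat \<Rightarrow> nat" where
  "all_test T 0 = const_prog 0"
| "all_test T (Suc n) = and_test (all_test T n) (T n)"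

lemma kleene_all_test:
  "(\<And>i. i < n \<Longrightarrow> kleene (T i) ns fs Fs (truth (P i)))
    \<Longrightarrow> kleene (all_test T n) ns fs Fs (truth (\<forall>i<n. P i))"
proof (induction n)
  case 0
  then show ?case by (simp add: truth_def kleene_const)
next
  case (Suc n)
  then have "kleene (all_test T (Suc n)) ns fs Fs (truth ((\<forall>i<n. P i) \<and> P n))"
    by (simp add: kleene_and_test)
  moreover have "(\<forall>i<n. P i) \<and> P n \<longleftrightarrow> (\<forall>i<Suc n. P i)" by (auto simp: less_Suc_eq)
  ultimately show ?case by simp
qed

definition ball_test :: "nat \<Rightarrow> nat" where
  "ball_test t = primrec_prog (const_prog 0) (if_zero (proj 0) (drop_arg t) (const_prog 1))"

lemma kleene_ball_test:
  assumes t: "\<And>j. kleene t (j # ns) fs Fs (truth (P j))"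
  shows "kleene (ball_test t) (n # ns) fs Fs (truth (\<forall>j<n. P j))"
  unfolding ball_test_def
proof (rule kleene_primrec[where h = "\<lambda>n. truth (\<forall>j<n. P j)"])
  show "kleene (const_prog 0) ns fs Fs (truth (\<forall>j<0. P j))" by (simp add: truth_def kleene_const)
  fix n
  let ?E = "truth (\<forall>j<n. P j) # n # ns"
  show "kleene (if_zero (proj 0) (drop_arg t) (const_prog 1)) ?E fs Fs (truth (\<forall>j<Suc n. P j))"
  proof (cases "\<forall>j<n. P j")
    case True
    then have "(\<forall>j<Suc n. P j) \<longleftrightarrow> P n" by (auto simp: less_Suc_eq)
    moreover have "kleene (if_zero (proj 0) (drop_arg t) (const_prog 1)) ?E fs Fs (truth (P n))"
      by (rule kleene_if_zero_then[OF kleene_proj_0 _ kleene_drop_arg[OF t]]) (simp add: True truth_def)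
    ultimately show ?thesis by simp
  next
    case False
    then have "\<not> (\<forall>j<Suc n. P j)" using less_SucI by blast
    then have "truth (\<forall>j<Suc n. P j) = 1" by (simp add: truth_def)
    moreover have "kleene (if_zero (proj 0) (drop_arg t) (const_prog 1)) ?E fs Fs 1"
      by (rule kleene_if_zero_else[OF kleene_proj_0 _ kleene_const]) (simp add: False truth_def)
    ultimately show ?thesis by (simp only:)
  qed
qed

lemma mem_nbhd_iff:
  assumes AB: "prod_decode b = (A, B)" and xs: "length xs = k" and pts: "length pts = l"
  shows "(xs, pts) \<in> nbhd b \<longleftrightarrow>
    length (list_decode A) = k \<and> (\<forall>i<k. code_nth A i = xs ! i) \<and> length (list_decode B) = l \<and>
    (\<forall>i<l. \<forall>j<length (list_decode (code_nth B i)). (pts ! i) j = code_nth (code_nth B i) j)"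
proof -
  have values_ok: "xs = list_decode A \<longleftrightarrow>
      length (list_decode A) = k \<and> (\<forall>i<k. code_nth A i = xs ! i)"
    using xs by (auto simp: code_nth_list_decode list_eq_iff_nth_eq)
  have segments_ok: "(\<forall>i<l. \<forall>j<length (list_decode (code_nth B i)).
        (pts ! i) j = code_nth (code_nth B i) j) \<longleftrightarrow>
      (\<forall>i<l. \<forall>j<length (list_decode (list_decode B ! i)).
        (pts ! i) j = list_decode (list_decode B ! i) ! j)"
    if "length (list_decode B) = l"
    using that by (simp add: code_nth_list_decode)
  have "(xs, pts) \<in> nbhd b \<longleftrightarrow> xs = list_decode A \<and> length (list_decode B) = l \<and>
      (\<forall>i<l. \<forall>j<length (list_decode (list_decode B ! i)).
        (pts ! i) j = list_decode (list_decode B ! i) ! j)"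
    unfolding nbhd_def using AB pts by simp
  then show ?thesis using values_ok segments_ok by blast
qed

definition values_code_prog :: nat where
  "values_code_prog = comp1 fst_decode_prog (proj 0)"

definition segments_code_prog :: nat where
  "segments_code_prog = comp1 snd_decode_prog (proj 0)"

definition segment_entry_test :: "nat \<Rightarrow> nat" where
  "segment_entry_test i =
     eq_test (comp1 (fun_app (Suc i)) (proj 0))
       (comp2 nth_prog (comp2 nth_prog (comp1 snd_decode_prog (proj 1)) (const_prog i)) (proj 0))"

definition nbhd_test :: "nat \<Rightarrow> nat \<Rightarrow> nat" where
  "nbhd_test k l =
     and_test (eq_test (comp1 length_prog values_code_prog) (const_prog k))
      (and_test (all_test (\<lambda>i. eq_test (comp2 nth_prog values_code_prog (const_prog i)) (proj (Suc i))) k)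
       (and_test (eq_test (comp1 length_prog segments_code_prog) (const_prog l))
         (all_test (\<lambda>i. comp1 (ball_test (segment_entry_test i))
             (comp1 length_prog (comp2 nth_prog segments_code_prog (const_prog i)))) l)))"

lemma kleene_nbhd_test:
  assumes xs: "length xs = k" and pts: "length pts = l"
  shows "kleene (nbhd_test k l) (b # xs @ tail) (f # pts) Fs (truth ((xs, pts) \<in> nbhd b))"
proof -
  obtain A B where AB: "prod_decode b = (A, B)" by (cases "prod_decode b")
  let ?E = "b # xs @ tail"
  have "kleene values_code_prog ?E (f # pts) Fs (fst (prod_decode b))"
    unfolding values_code_prog_def by (rule kleene_comp1[OF kleene_proj_0 kleene_fst_decode])
  with AB have A: "kleene values_code_prog ?E (f # pts) Fs A" by simp
  have "kleene segments_code_prog ?E (f # pts) Fs (snd (prod_decode b))"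
    unfolding segments_code_prog_def by (rule kleene_comp1[OF kleene_proj_0 kleene_snd_decode])
  with AB have B: "kleene segments_code_prog ?E (f # pts) Fs B" by simp
  have coord: "kleene (proj (Suc i)) ?E (f # pts) Fs (xs ! i)" if "i < k" for i
    using that xs by (intro kleene_proj) (simp_all add: nth_append)
  have values_ok: "kleene (eq_test (comp2 nth_prog values_code_prog (const_prog i)) (proj (Suc i)))
      ?E (f # pts) Fs (truth (code_nth A i = xs ! i))" if "i < k" for i
    by (rule kleene_eq_test[OF kleene_comp2[OF A kleene_const kleene_nth] coord[OF that]])
  have "kleene (comp1 snd_decode_prog (proj 1)) (j # ?E) (f # pts) Fs (snd (prod_decode b))" for j
    by (rule kleene_comp1[OF kleene_proj_1 kleene_snd_decode])
  with AB have segment: "kleene (comp2 nth_prog (comp1 snd_decode_prog (proj 1)) (const_prog i))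
      (j # ?E) (f # pts) Fs (code_nth B i)" for i j
    by (simp add: kleene_comp2[OF _ kleene_const kleene_nth])
  have "kleene (fun_app (Suc i)) (j # j # ?E) (f # pts) Fs ((pts ! i) j)"
    if "i < l" for i j
    using that pts by (intro kleene_fun_app) simp_all
  then have entry: "kleene (segment_entry_test i) (j # ?E) (f # pts) Fs
      (truth ((pts ! i) j = code_nth (code_nth B i) j))" if "i < l" for i j
    unfolding segment_entry_test_def
    by (rule kleene_eq_test[OF kleene_comp1[OF kleene_proj_0] kleene_comp2[OF segment kleene_proj_0 kleene_nth]])
      (rule that)
  have segments_ok: "kleene (comp1 (ball_test (segment_entry_test i))
        (comp1 length_prog (comp2 nth_prog segments_code_prog (const_prog i)))) ?E (f # pts) Fs
      (truth (\<forall>j<length (list_decode (code_nth B i)). (pts ! i) j = code_nth (code_nth B i) j))"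
    if "i < l" for i
    by (rule kleene_comp1[OF kleene_comp1[OF kleene_comp2[OF B kleene_const kleene_nth] kleene_length]
          kleene_ball_test[OF entry[OF that]]])
  have "kleene (nbhd_test k l) ?E (f # pts) Fs (truth (
      length (list_decode A) = k \<and> (\<forall>i<k. code_nth A i = xs ! i) \<and>
      length (list_decode B) = l \<and>
      (\<forall>i<l. \<forall>j<length (list_decode (code_nth B i)). (pts ! i) j = code_nth (code_nth B i) j)))"
    unfolding nbhd_test_def
    by (rule kleene_and_test[OF kleene_eq_test[OF kleene_comp1[OF A kleene_length] kleene_const]
          kleene_and_test[OF kleene_all_test[OF values_ok]
            kleene_and_test[OF kleene_eq_test[OF kleene_comp1[OF B kleene_length] kleene_const]
              kleene_all_test[OF segments_ok]]]])
  then show ?thesis using mem_nbhd_iff[OF AB xs pts] by simp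
qed

section \<open>Well-foundedness of code trees\<close>

lemma node_take: "node f \<tau> \<Longrightarrow> node f (take n \<tau>)"
proof (induction arbitrary: n rule: node.induct)
  case root
  then show ?case by (simp add: node.root)
next
  case (compl \<sigma>)
  then show ?case by (cases "n \<le> length \<sigma>") (auto intro: node.compl)
next
  case (susl \<sigma> m)
  then show ?case by (cases "n \<le> length \<sigma>") (auto intro: node.susl)
qed

definition child_rel :: "(nat \<Rightarrow> nat) \<Rightarrow> (nat list \<times> nat list) set" where
  "child_rel f = {(\<tau>, \<sigma>). node f \<tau> \<and> (\<exists>a. \<tau> = \<sigma> @ [a])}"

text \<open>An infinite descending chain of nodes spells out an infinite branch of the tree.\<close>
lemma wf_child_rel:
  assumes no_branch: "\<not> (\<exists>g. \<forall>n. node f (map g [0..<n]))"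
  shows "wf (child_rel f)"
proof (rule ccontr)
  assume "\<not> wf (child_rel f)"
  then obtain s where s: "\<And>i. (s (Suc i), s i) \<in> child_rel f"
    unfolding wf_iff_no_infinite_down_chain by blast
  then have step: "\<And>i. \<exists>a. s (Suc i) = s i @ [a]" and node: "\<And>i. node f (s (Suc i))"
    unfolding child_rel_def by auto
  have prefix: "\<exists>ys. s (i + d) = s i @ ys" for i d
  proof (induction d)
    case (Suc d)
    then show ?case using step[of "i + d"] by force
  qed simp
  have len: "length (s i) = length (s 0) + i" for i
  proof (induction i)
    case (Suc i)
    then show ?case using step[of i] by auto
  qed simp
  define g where "g j = s (Suc j) ! j" for j
  have "map g [0..<n] = take n (s n)" for n
  proof (rule nth_equalityI)
    show "length (map g [0..<n]) = length (take n (s n))" using len[of n] by simp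
    fix j assume "j < length (map g [0..<n])"
    then have j: "j < n" by simp
    obtain ys where "s n = s (Suc j) @ ys" using prefix[of "Suc j" "n - Suc j"] j by auto
    moreover have "j < length (s (Suc j))" using len[of "Suc j"] by simp
    ultimately show "map g [0..<n] ! j = take n (s n) ! j" using j by (simp add: g_def nth_append)
  qed
  moreover have "node f (s n)" for n
  proof (cases n)
    case 0
    obtain a where "s (Suc 0) = s 0 @ [a]" using step[of 0] by blast
    then show ?thesis using node_take[OF node[of 0], of "length (s 0)"] 0 by simp
  next
    case (Suc m)
    then show ?thesis using node[of m] by simp
  qed
  ultimately have "node f (map g [0..<n])" for n using node_take by metis
  then show False using no_branch by blast
qed

lemma node_induct [consumes 1, case_names no_branch step]:
  assumes "node f \<sigma>" and "\<not> (\<exists>g. \<forall>n. node f (map g [0..<n]))"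
    and step: "\<And>\<sigma>. node f \<sigma> \<Longrightarrow> (\<And>a. node f (\<sigma> @ [a]) \<Longrightarrow> P (\<sigma> @ [a])) \<Longrightarrow> P \<sigma>"
  shows "P \<sigma>"
  using assms(1)
proof (induction \<sigma> rule: wf_induct[OF wf_child_rel[OF assms(2)]])
  case (1 \<sigma>)
  show ?case by (rule step[OF 1(2)]) (use 1(1) in \<open>auto simp: child_rel_def\<close>)
qed

lemma denotes_unique:
  assumes code: "is_code k cs f"
  shows "node f \<sigma> \<Longrightarrow> \<exists>!S. denotes k cs f \<sigma> S"
proof (induction \<sigma> rule: node_induct)
  case no_branch
  show ?case using code by (simp add: is_code_def)
next
  case (step \<sigma>)
  have "lab f \<sigma> \<le> 2" using code step(1) by (simp add: is_code_def)
  then consider (leaf) "lab f \<sigma> = 0" | (compl) "lab f \<sigma> = 1" | (susl) "lab f \<sigma> = 2" by linarith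
  then show ?case
  proof cases
    case leaf
    then have "denotes k cs f \<sigma> S \<longleftrightarrow> S = clopen_of k cs f \<sigma>" for S
      by (auto intro: denotes.leaf elim: denotes.cases)
    then show ?thesis by blast
  next
    case compl
    then obtain S0 where S0: "\<And>S. denotes k cs f (\<sigma> @ [0]) S \<longleftrightarrow> S = S0"
      using step(2)[OF node.compl[OF step(1)]] by metis
    with compl have "denotes k cs f \<sigma> S \<longleftrightarrow> S = X_space k cs - S0" for S
      by (auto intro: denotes.compl elim: denotes.cases)
    then show ?thesis by blast
  next
    case susl
    define P where "P s = (THE S. denotes k cs f (\<sigma> @ [list_encode s]) S)" for s
    have P: "denotes k cs f (\<sigma> @ [list_encode s]) S \<longleftrightarrow> S = P s" for s S
      using step(2)[OF node.susl[OF step(1) susl]] unfolding P_def by (metis the_equality)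
    have "denotes k cs f \<sigma> S \<longleftrightarrow> S = suslin_op P" for S
    proof
      assume "denotes k cs f \<sigma> S"
      then obtain P' where "\<And>s. denotes k cs f (\<sigma> @ [list_encode s]) (P' s)" and "S = suslin_op P'"
        using susl by (cases rule: denotes.cases) auto
      moreover from this(1) have "P' = P" using P by blast
      ultimately show "S = suslin_op P" by simp
    next
      assume "S = suslin_op P"
      then show "denotes k cs f \<sigma> S" using susl P by (blast intro: denotes.susl)
    qed
    then show ?thesis by blast
  qed
qed

lemma coded_set_denotes: "is_code k cs f \<Longrightarrow> denotes k cs f [] (coded_set k cs f)"
  unfolding coded_set_def by (rule theI'[OF denotes_unique[OF _ node.root]])

section \<open>Evaluating a code\<close>

text \<open>The evaluator runs on argument lists of the form self # code(\<sigma>) # xs @ junk,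
  where xs are the numeric coordinates of the point; each recursive call re-establishes
  this shape by copying xs to the front with copy_args.\<close>
definition copy_args :: "nat \<Rightarrow> nat \<Rightarrow> nat list" where
  "copy_args off k = map (\<lambda>i. proj (off + i)) [0..<k]"

lemma kleene_call_copy_args:
  assumes ts: "list_all2 (\<lambda>t v. kleene t E fs Fs v) ts vs"
    and E: "E = pre @ xs @ tail" and off: "length pre = off" and k: "length xs = k"
    and g: "kleene g (vs @ xs @ E) fs Fs w"
  shows "kleene (call (ts @ copy_args off k) g) E fs Fs w"
proof (rule kleene_call[where vs = "vs @ xs"])
  have "list_all2 (\<lambda>t v. kleene t E fs Fs v) (copy_args off k) xs"
    using E off k unfolding copy_args_def list_all2_conv_all_nth
    by (auto intro!: kleene_proj simp: nth_append)
  with ts show "list_all2 (\<lambda>t v. kleene t E fs Fs v) (ts @ copy_args off k) (vs @ xs)"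
    by (rule list_all2_appendI)
  show "kleene g ((vs @ xs) @ E) fs Fs w" using g by simp
qed

definition leaf_entry_prog :: nat where
  "leaf_entry_prog = comp1 (fun_app 0) (comp2 snoc_prog (proj 2) (proj 1))"

lemma kleene_leaf_entry:
  "kleene leaf_entry_prog (y # n # list_encode \<sigma> # ns) (f # pts) Fs (f (list_encode (\<sigma> @ [n])))"
proof -
  have "kleene (comp2 snoc_prog (proj 2) (proj 1)) (y # n # list_encode \<sigma> # ns) (f # pts) Fs
      (list_encode (list_decode (list_encode \<sigma>) @ [n]))"
    by (rule kleene_comp2[OF kleene_proj_2 kleene_proj_1 kleene_snoc])
  then show ?thesis unfolding leaf_entry_prog_def
    by (rule kleene_comp1) (simp add: kleene_fun_app)
qed

context
  fixes k l :: nat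
begin

definition leaf_member_test :: nat where
  "leaf_member_test = call ([comp1 snd_decode_prog leaf_entry_prog] @ copy_args 3 k) (nbhd_test k l)"

definition leaf_bit_prog :: nat where
  "leaf_bit_prog =
     if_zero (eq_test (comp1 fst_decode_prog leaf_entry_prog) (const_prog 1)) (const_prog 1) (const_prog 0)"

definition leaf_search :: nat where
  "leaf_search =
     if_zero leaf_member_test leaf_bit_prog
       (call ([proj 0, proj 0, comp1 succ_prog (proj 1), proj 2] @ copy_args 3 k) run_prog)"

lemma kleene_leaf_member_test:
  assumes "length xs = k" and "length pts = l"
  shows "kleene leaf_member_test (y # n # list_encode \<sigma> # xs @ tail) (f # pts) Fs
    (truth ((xs, pts) \<in> leaf_nbhd f \<sigma> n))"
  unfolding leaf_member_test_def leaf_nbhd_def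
  by (rule kleene_call_copy_args[where pre = "[y, n, list_encode \<sigma>]" and xs = xs
        and vs = "[snd (prod_decode (f (list_encode (\<sigma> @ [n]))))]"])
    (simp_all add: assms kleene_comp1[OF kleene_leaf_entry kleene_snd_decode] kleene_nbhd_test)

lemma kleene_leaf_bit:
  "kleene leaf_bit_prog (y # n # list_encode \<sigma> # ns) (f # pts) Fs (if leaf_bit f \<sigma> n = 1 then 1 else 0)"
  unfolding leaf_bit_prog_def leaf_bit_def
  by (rule kleene_if_zero[OF kleene_eq_test[OF kleene_comp1[OF kleene_leaf_entry kleene_fst_decode]
          kleene_const]])
    (auto simp: truth_def kleene_const)

text \<open>The search terminates because the point lies in the N-th neighbourhood.\<close>
lemma kleene_leaf_search:
  assumes xs: "length xs = k" and pts: "length pts = l"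
    and N: "(xs, pts) \<in> leaf_nbhd f \<sigma> N"
    and consistent: "\<And>n. (xs, pts) \<in> leaf_nbhd f \<sigma> n \<Longrightarrow> leaf_bit f \<sigma> n = leaf_bit f \<sigma> N"
  shows "n \<le> N \<Longrightarrow> kleene leaf_search (leaf_search # n # list_encode \<sigma> # xs @ tail) (f # pts) Fs
    (if leaf_bit f \<sigma> N = 1 then 1 else 0)"
proof (induction "N - n" arbitrary: n tail rule: less_induct)
  case less
  let ?E = "leaf_search # n # list_encode \<sigma> # xs @ tail"
  show ?case
  proof (rule kleene_unfold[OF leaf_search_def], rule kleene_if_zero[OF kleene_leaf_member_test[OF xs pts]])
    assume "truth ((xs, pts) \<in> leaf_nbhd f \<sigma> n) = 0"
    then have "leaf_bit f \<sigma> n = leaf_bit f \<sigma> N" by (intro consistent) (simp add: truth_def split: if_splits)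
    from kleene_leaf_bit[of leaf_search n \<sigma> "xs @ tail" f pts Fs, unfolded this]
    show "kleene leaf_bit_prog ?E (f # pts) Fs (if leaf_bit f \<sigma> N = 1 then 1 else 0)" .
  next
    assume "truth ((xs, pts) \<in> leaf_nbhd f \<sigma> n) \<noteq> 0"
    then have "n \<noteq> N" using N by (auto simp: truth_def)
    then have "N - Suc n < N - n" and "Suc n \<le> N" using less.prems by auto
    from less.hyps[OF this]
    have "kleene leaf_search (leaf_search # Suc n # list_encode \<sigma> # xs @ ?E) (f # pts) Fs
        (if leaf_bit f \<sigma> N = 1 then 1 else 0)" by simp
    then show "kleene (call ([proj 0, proj 0, comp1 succ_prog (proj 1), proj 2] @ copy_args 3 k) run_prog)
        ?E (f # pts) Fs (if leaf_bit f \<sigma> N = 1 then 1 else 0)"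
      by (intro kleene_call_copy_args[where pre = "[leaf_search, n, list_encode \<sigma>]" and xs = xs
            and vs = "[leaf_search, leaf_search, Suc n, list_encode \<sigma>]"])
        (simp_all add: xs kleene_proj kleene_comp1[OF kleene_proj_1 kleene_succ] kleene_run
          split del: if_split)
  qed
qed

end

definition leaf_prog :: "nat \<Rightarrow> nat \<Rightarrow> nat" where
  "leaf_prog k l = call ([const_prog (leaf_search k l), const_prog 0, proj 1] @ copy_args 2 k) (leaf_search k l)"

lemma kleene_leaf_prog:
  assumes valid: "valid_clopen k cs f \<sigma>" and x: "(xs, pts) \<in> X_space k cs"
  shows "kleene (leaf_prog k (length cs)) (y # list_encode \<sigma> # xs @ tail) (f # pts) Fs
    (if (xs, pts) \<in> clopen_of k cs f \<sigma> then 1 else 0)"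
proof -
  have xs: "length xs = k" and pts: "length pts = length cs" using x by (auto simp: X_space_def)
  obtain N where N: "(xs, pts) \<in> leaf_nbhd f \<sigma> N" using valid x by (auto simp: valid_clopen_def)
  have consistent: "leaf_bit f \<sigma> n = leaf_bit f \<sigma> N" if "(xs, pts) \<in> leaf_nbhd f \<sigma> n" for n
    using bspec[OF conjunct2[OF valid[unfolded valid_clopen_def]] x] N that by blast
  have "(xs, pts) \<in> clopen_of k cs f \<sigma> \<longleftrightarrow> (\<exists>n. (xs, pts) \<in> leaf_nbhd f \<sigma> n \<and> leaf_bit f \<sigma> n = 1)"
    using x by (simp add: clopen_of_def)
  also have "\<dots> \<longleftrightarrow> leaf_bit f \<sigma> N = 1" using N consistent by metis
  finally have "(xs, pts) \<in> clopen_of k cs f \<sigma> \<longleftrightarrow> leaf_bit f \<sigma> N = 1" .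
  moreover have "kleene (leaf_search k (length cs))
      (leaf_search k (length cs) # 0 # list_encode \<sigma> # xs @ y # list_encode \<sigma> # xs @ tail) (f # pts) Fs
      (if leaf_bit f \<sigma> N = 1 then 1 else 0)"
    by (rule kleene_leaf_search[OF xs pts N consistent]) simp_all
  ultimately show ?thesis unfolding leaf_prog_def
    by (intro kleene_call_copy_args[where pre = "[y, list_encode \<sigma>]" and xs = xs
          and vs = "[leaf_search k (length cs), 0, list_encode \<sigma>]"])
      (simp_all add: xs kleene_const kleene_proj_1 split del: if_split)
qed

lemma suslin_S_indicator:
  "suslin_S (\<lambda>m. if x \<in> P (list_decode m) then 1 else 0) = (if x \<in> suslin_op P then 1 else 0)"
  unfolding suslin_S_def suslin_op_def seqcode_def by auto

definition lab_prog :: nat where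
  "lab_prog = comp1 (fun_app 0) (proj 1)"

lemma kleene_lab: "kleene lab_prog (y # list_encode \<sigma> # ns) (f # pts) Fs (lab f \<sigma>)"
  unfolding lab_prog_def lab_def by (rule kleene_comp1[OF kleene_proj_1]) (simp add: kleene_fun_app)

definition compl_prog :: "nat \<Rightarrow> nat" where
  "compl_prog k =
     comp2 sub_prog (const_prog 1)
       (call ([proj 0, proj 0, comp2 snoc_prog (proj 1) (const_prog 0)] @ copy_args 2 k) run_prog)"

lemma kleene_compl_prog:
  assumes xs: "length xs = k"
    and child: "kleene e (e # list_encode (\<sigma> @ [0]) # xs @ e # list_encode \<sigma> # xs @ tail) fs Fs v"
  shows "kleene (compl_prog k) (e # list_encode \<sigma> # xs @ tail) fs Fs (1 - v)"
proof -
  let ?E = "e # list_encode \<sigma> # xs @ tail"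
  have "kleene (comp2 snoc_prog (proj 1) (const_prog 0)) ?E fs Fs
      (list_encode (list_decode (list_encode \<sigma>) @ [0]))"
    by (rule kleene_comp2[OF kleene_proj_1 kleene_const kleene_snoc])
  then have "kleene (call ([proj 0, proj 0, comp2 snoc_prog (proj 1) (const_prog 0)] @ copy_args 2 k) run_prog)
      ?E fs Fs v"
    by (intro kleene_call_copy_args[where pre = "[e, list_encode \<sigma>]" and xs = xs
          and vs = "[e, e, list_encode (\<sigma> @ [0])]"])
      (simp_all add: xs kleene_proj_0 kleene_run child)
  then show ?thesis unfolding compl_prog_def by (rule kleene_comp2[OF kleene_const _ kleene_sub])
qed

definition scheme_prog :: "nat \<Rightarrow> nat" where
  "scheme_prog k = call ([proj 1, proj 1, comp2 snoc_prog (proj 2) (proj 0)] @ copy_args 3 k) run_prog"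

lemma kleene_scheme_prog:
  assumes xs: "length xs = k"
    and child: "kleene e (e # list_encode (\<sigma> @ [a]) # xs @ a # e # list_encode \<sigma> # xs @ tail) fs Fs v"
  shows "kleene (scheme_prog k) (a # e # list_encode \<sigma> # xs @ tail) fs Fs v"
proof -
  let ?E = "a # e # list_encode \<sigma> # xs @ tail"
  have "kleene (comp2 snoc_prog (proj 2) (proj 0)) ?E fs Fs
      (list_encode (list_decode (list_encode \<sigma>) @ [a]))"
    by (rule kleene_comp2[OF kleene_proj_2 kleene_proj_0 kleene_snoc])
  then show ?thesis unfolding scheme_prog_def
    by (intro kleene_call_copy_args[where pre = "[a, e, list_encode \<sigma>]" and xs = xs
          and vs = "[e, e, list_encode (\<sigma> @ [a])]"])
      (simp_all add: xs kleene_proj_1 kleene_run child)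
qed

definition eval_prog :: "nat \<Rightarrow> nat \<Rightarrow> nat" where
  "eval_prog k l =
     if_zero lab_prog (leaf_prog k l)
       (if_zero (comp1 pred_prog lab_prog) (compl_prog k) (apply_type2 (scheme_prog k)))"

lemma kleene_eval_prog:
  assumes code: "is_code k cs f"
  shows "node f \<sigma> \<Longrightarrow> denotes k cs f \<sigma> S \<Longrightarrow> (xs, pts) \<in> X_space k cs \<Longrightarrow>
    kleene (eval_prog k (length cs)) (eval_prog k (length cs) # list_encode \<sigma> # xs @ tail) (f # pts)
      [suslin_S] (if (xs, pts) \<in> S then 1 else 0)"
proof (induction \<sigma> arbitrary: S tail rule: node_induct)
  case no_branch
  show ?case using code by (simp add: is_code_def)
next
  case (step \<sigma>)
  note node = step(1) and IH = step(2) and den = step(3) and x = step(4)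
  let ?e = "eval_prog k (length cs)"
  have xs: "length xs = k" using x by (simp add: X_space_def)
  have "lab f \<sigma> \<le> 2" using code node by (simp add: is_code_def)
  then consider (leaf) "lab f \<sigma> = 0" | (compl) "lab f \<sigma> = 1" | (susl) "lab f \<sigma> = 2" by linarith
  then show ?case
  proof cases
    case leaf
    then have valid: "valid_clopen k cs f \<sigma>" using code node by (simp add: is_code_def)
    from den leaf have S: "S = clopen_of k cs f \<sigma>" by (cases rule: denotes.cases) auto
    show ?thesis unfolding S
      by (rule kleene_unfold[OF eval_prog_def],
          rule kleene_if_zero_then[OF kleene_lab leaf kleene_leaf_prog[OF valid x]])
  next
    case compl
    from den compl obtain S' where S': "denotes k cs f (\<sigma> @ [0]) S'" and S: "S = X_space k cs - S'"
      by (cases rule: denotes.cases) auto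
    have "kleene ?e (?e # list_encode (\<sigma> @ [0]) # xs @ ?e # list_encode \<sigma> # xs @ tail) (f # pts)
        [suslin_S] (if (xs, pts) \<in> S' then 1 else 0)"
      by (rule IH[OF node.compl[OF node compl] S' x])
    from kleene_compl_prog[OF xs this]
    have "kleene ?e (?e # list_encode \<sigma> # xs @ tail) (f # pts) [suslin_S] (1 - (if (xs, pts) \<in> S' then 1 else 0))"
      by (intro kleene_unfold[OF eval_prog_def] kleene_if_zero_else[OF kleene_lab]
          kleene_if_zero_then[OF kleene_comp1[OF kleene_lab kleene_pred]]) (simp_all add: compl)
    moreover have "1 - (if (xs, pts) \<in> S' then 1 else 0) = (if (xs, pts) \<in> S then 1 else (0::nat))"
      using S x by auto
    ultimately show ?thesis by simp
  next
    case susl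
    from den susl obtain P where P: "\<And>s. denotes k cs f (\<sigma> @ [list_encode s]) (P s)"
      and S: "S = suslin_op P"
      by (cases rule: denotes.cases) auto
    have "kleene (scheme_prog k) (m # ?e # list_encode \<sigma> # xs @ tail) (f # pts) [suslin_S]
        (if (xs, pts) \<in> P (list_decode m) then 1 else 0)" for m
      using P[of "list_decode m"]
      by (intro kleene_scheme_prog[OF xs] IH[OF node.susl[OF node susl] _ x]) simp
    then have "kleene (apply_type2 (scheme_prog k)) (?e # list_encode \<sigma> # xs @ tail) (f # pts) [suslin_S]
        (if (xs, pts) \<in> S then 1 else 0)"
      unfolding S suslin_S_indicator[symmetric] by (rule kleene_apply_type2)
    then show ?thesis
      by (intro kleene_unfold[OF eval_prog_def] kleene_if_zero_else[OF kleene_lab]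
          kleene_if_zero_else[OF kleene_comp1[OF kleene_lab kleene_pred]]) (simp_all add: susl)
  qed
qed

definition char_prog :: "nat \<Rightarrow> nat \<Rightarrow> nat" where
  "char_prog k l = call ([const_prog (eval_prog k l), const_prog 0] @ copy_args 0 k) (eval_prog k l)"

lemma kleene_char_prog:
  assumes code: "is_code k cs f" and x: "x \<in> X_space k cs"
  shows "kleene (char_prog k (length cs)) (fst x) (f # snd x) [suslin_S] (if x \<in> coded_set k cs f then 1 else 0)"
proof -
  obtain xs pts where xpts: "x = (xs, pts)" by (cases x)
  with x have xs: "length xs = k" by (simp add: X_space_def)
  have "kleene (eval_prog k (length cs)) (eval_prog k (length cs) # list_encode [] # xs @ xs) (f # pts)
      [suslin_S] (if (xs, pts) \<in> coded_set k cs f then 1 else 0)"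
    by (rule kleene_eval_prog[OF code node.root coded_set_denotes[OF code]]) (use x xpts in simp)
  then show ?thesis unfolding char_prog_def xpts fst_conv snd_conv
    by (intro kleene_call_copy_args[where pre = "[]" and xs = xs and tail = "[]"
          and vs = "[eval_prog k (length cs), 0]"])
      (simp_all add: xs kleene_const split del: if_split)
qed

theorem mainTheorem3:
  fixes k :: nat and cs :: "bool list"
  shows "\<exists>e. \<forall>f. is_code k cs f \<longrightarrow>
           (\<forall>x\<in>X_space k cs.
              kleene e (fst x) (f # snd x) [suslin_S]
                (if x \<in> coded_set k cs f then 1 else 0))"
  by (intro exI[of _ "char_prog k (length cs)"] allI impI ballI kleene_char_prog)

end
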